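(* For all integers $m,n\geq 3$, with $T_{m,n}=C_m\Box C_n$, we have $\chi_i(T_{m,n})\geq 5$. Moreover, $\chi_i(T_{m,n})=5$ if and only if $m\equiv 0\pmod 5$ and $n\equiv 0 \pmod 5$.
   Context: For a graph $G$, an incidence is a pair $(v,e)$ with $v\in V(G)$, $e\in E(G)$ and $v$ incident with $e$. Two incidences $(v,e)$ and $(w,f)$ are adjacent if $v=w$, or $e=f$, or the edge $vw$ equals $e$ or $f$. An incidence $k$-coloring of $G$ is a map from the set of incidences of $G$ to a set of $k$ colors such that adjacent incidences receive distinct colors; the incidence chromatic number $\chi_i(G)$ is the least such $k$. $C_n$ denotes the cycle on $n$ vertices and $\Box$ the Cartesian product of graphs: $G\Box H$ has vertex set $V(G)\times V(H)$, with $(u_1,v_1)$ adjacent to $(u_2,v_2)$ iff either $u_1=u_2$ and $v_1v_2\in E(H)$, or $v_1=v_2$ and $u_1u_2\in E(G)$. *)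

theory Defs
  imports Main
begin

text \<open>Simple graphs are represented by their edge set: a set of 2-element vertex sets.\<close>

definition incidences :: "'a set set \<Rightarrow> ('a \<times> 'a set) set" where
  "incidences E = {(v, e). e \<in> E \<and> v \<in> e}"

definition inc_adjacent :: "('a \<times> 'a set) \<Rightarrow> ('a \<times> 'a set) \<Rightarrow> bool" where
  "inc_adjacent I J = (case I of (v, e) \<Rightarrow> case J of (w, f) \<Rightarrow>
      v = w \<or> e = f \<or> {v, w} = e \<or> {v, w} = f)"

definition incidence_colouring :: "'a set set \<Rightarrow> nat \<Rightarrow> (('a \<times> 'a set) \<Rightarrow> nat) \<Rightarrow> bool" where
  "incidence_colouring E k c \<longleftrightarrow>
     (\<forall>I\<in>incidences E. c I < k) \<and>
     (\<forall>I\<in>incidences E. \<forall>J\<in>incidences E. I \<noteq> J \<and> inc_adjacent I J \<longrightarrow> c I \<noteq> c J)"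

definition incidence_chromatic_number :: "'a set set \<Rightarrow> nat" where
  "incidence_chromatic_number E = (LEAST k. \<exists>c. incidence_colouring E k c)"

definition cycle_edges :: "nat \<Rightarrow> nat set set" where
  "cycle_edges m = {{i, (i + 1) mod m} | i. i < m}"

definition cart_prod_edges ::
  "'a set \<Rightarrow> 'a set set \<Rightarrow> 'b set \<Rightarrow> 'b set set \<Rightarrow> ('a \<times> 'b) set set" where
  "cart_prod_edges VG EG VH EH =
     {{(u, v1), (u, v2)} | u v1 v2. u \<in> VG \<and> {v1, v2} \<in> EH} \<union>
     {{(u1, v), (u2, v)} | u1 u2 v. v \<in> VH \<and> {u1, u2} \<in> EG}"

text \<open>The torus T_{m,n} = C_m \<box> C_n (edge set; all vertices have positive degree).\<close>
definition torus_edges :: "nat \<Rightarrow> nat \<Rightarrow> (nat \<times> nat) set set" where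
  "torus_edges m n = cart_prod_edges {0..<m} (cycle_edges m) {0..<n} (cycle_edges n)"

end

theory Submission
  imports Defs "HOL-Library.Periodic_Fun" "HOL-Computational_Algebra.Primes"
begin

text \<open>Every vertex of the torus has degree 4, and the four incidences leaving a vertex together
  with any incidence entering it are pairwise adjacent, so at least 5 colours are needed. In a
  5-colouring the incidences leaving \<open>v\<close> use four colours, hence all incidences entering \<open>v\<close>
  carry the fifth one. Lifted to \<open>\<int>\<^sup>2\<close>, this entering colour is injective on every closed
  neighbourhood; such a colouring is locally invariant under knight moves, hence 5-periodic in
  both directions, which together with the periods \<open>m\<close> and \<open>n\<close> forces \<open>5 dvd m\<close> and
  \<open>5 dvd n\<close>. Conversely, if \<open>5\<close> divides both, colouring the incidence \<open>(v, vw)\<close> by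
  \<open>w\<^sub>1 + 2 w\<^sub>2 mod 5\<close> works.\<close>

section \<open>Incidence colourings\<close>

lemma incidence_colouring_less:
  "incidence_colouring E k c \<Longrightarrow> e \<in> E \<Longrightarrow> v \<in> e \<Longrightarrow> c (v, e) < k"
  unfolding incidence_colouring_def incidences_def by blast

lemma incidence_colouring_out_out:
  assumes "incidence_colouring E k c" "{v, w} \<in> E" "{v, w'} \<in> E" "w \<noteq> w'"
  shows "c (v, {v, w}) \<noteq> c (v, {v, w'})"
proof -
  have "{v, w} \<noteq> {v, w'}" using assms(4) by (auto simp: doubleton_eq_iff)
  then show ?thesis
    using assms(1-3) unfolding incidence_colouring_def incidences_def inc_adjacent_def by auto
qed

lemma incidence_colouring_in_out:
  assumes "incidence_colouring E k c" "{v, w} \<in> E" "{v, w'} \<in> E" "v \<noteq> w"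
  shows "c (w, {v, w}) \<noteq> c (v, {v, w'})"
  using assms unfolding incidence_colouring_def incidences_def inc_adjacent_def
  by (auto simp: insert_commute)

lemma incidence_colouring_out_colours:
  assumes c: "incidence_colouring E k c"
    and W: "finite W" "v \<notin> W" "\<forall>w\<in>W. {v, w} \<in> E"
  shows "card ((\<lambda>w. c (v, {v, w})) ` W) = card W"
    and "(\<lambda>w. c (v, {v, w})) ` W \<subseteq> {..<k}"
    and "w \<in> W \<Longrightarrow> c (w, {v, w}) \<in> {..<k} - (\<lambda>w. c (v, {v, w})) ` W"
proof -
  show "card ((\<lambda>w. c (v, {v, w})) ` W) = card W"
    using incidence_colouring_out_out[OF c] W by (intro card_image inj_onI) blast
  show "(\<lambda>w. c (v, {v, w})) ` W \<subseteq> {..<k}"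
    using incidence_colouring_less[OF c] W(3) by blast
  show "c (w, {v, w}) \<in> {..<k} - (\<lambda>w. c (v, {v, w})) ` W" if "w \<in> W"
  proof -
    have "{v, w} \<in> E" using W(3) that by blast
    then have "c (w, {v, w}) < k" using incidence_colouring_less[OF c] by blast
    moreover have "c (w, {v, w}) \<noteq> c (v, {v, w'})" if "w' \<in> W" for w'
      using incidence_colouring_in_out[OF c \<open>{v, w} \<in> E\<close> bspec[OF W(3) that]] \<open>w \<in> W\<close> W(2) by blast
    ultimately show ?thesis by auto
  qed
qed

lemma incidence_colouring_degree_bound:
  assumes c: "incidence_colouring E k c" and W: "finite W" "v \<notin> W" "\<forall>w\<in>W. {v, w} \<in> E"
    and "w \<in> W"
  shows "card W < k"
proof -
  let ?out = "(\<lambda>w. c (v, {v, w})) ` W"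
  note out = incidence_colouring_out_colours[OF c W]
  have "card W < card (insert (c (w, {v, w})) ?out)"
    using out(1) out(3)[OF \<open>w \<in> W\<close>] W(1) by simp
  also have "\<dots> \<le> card {..<k}"
    using out(2) out(3)[OF \<open>w \<in> W\<close>] by (intro card_mono) auto
  finally show ?thesis by simp
qed

text \<open>With exactly one colour more than the degree of \<open>v\<close>, the out-incidences at \<open>v\<close> use all
  colours but one, so all in-incidences at \<open>v\<close> get that last colour.\<close>
lemma incidence_colouring_in_colours_eq:
  assumes c: "incidence_colouring E (Suc (card W)) c"
    and W: "finite W" "v \<notin> W" "\<forall>w\<in>W. {v, w} \<in> E"
    and "w \<in> W" "w' \<in> W"
  shows "c (w, {v, w}) = c (w', {v, w'})"
proof -
  let ?out = "(\<lambda>w. c (v, {v, w})) ` W"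
  note out = incidence_colouring_out_colours[OF c W]
  have "card ({..<Suc (card W)} - ?out) = 1"
    using out(1,2) by (simp add: card_Diff_subset finite_subset)
  then obtain a where "{..<Suc (card W)} - ?out = {a}"
    by (rule card_1_singletonE)
  then show ?thesis
    using out(3)[OF \<open>w \<in> W\<close>] out(3)[OF \<open>w' \<in> W\<close>] by simp
qed

lemma incidences_doubleton:
  assumes "\<forall>e\<in>E. \<exists>a b. a \<noteq> b \<and> e = {a, b}" "I \<in> incidences E"
  obtains v a where "I = (v, {v, a})" "{v, a} \<in> E" "a \<noteq> v"
proof -
  obtain v e where "I = (v, e)" "e \<in> E" "v \<in> e" using assms(2) unfolding incidences_def by blast
  moreover obtain x y where "x \<noteq> y" "e = {x, y}" using assms(1) \<open>e \<in> E\<close> by blast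
  ultimately show thesis using that by (auto simp: insert_commute)
qed

lemma incidence_colouring_of_vertex_colouring:
  assumes edges: "\<forall>e\<in>E. \<exists>a b. a \<noteq> b \<and> e = {a, b}"
    and less: "\<forall>e\<in>E. \<forall>u\<in>e. \<phi> u < k"
    and nbr: "\<And>v u. {v, u} \<in> E \<Longrightarrow> \<phi> u \<noteq> \<phi> v"
    and nbrs: "\<And>v u w. {v, u} \<in> E \<Longrightarrow> {v, w} \<in> E \<Longrightarrow> u \<noteq> w \<Longrightarrow> \<phi> u \<noteq> \<phi> w"
  shows "incidence_colouring E k (\<lambda>(v, e). \<phi> (the_elem (e - {v})))"
    (is "incidence_colouring E k ?c")
proof -
  have colour: "?c (v, {v, a}) = \<phi> a" if "a \<noteq> v" for v a
    using that by (simp add: insert_Diff_if)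
  have "\<forall>I\<in>incidences E. ?c I < k"
  proof
    fix I assume "I \<in> incidences E"
    with edges show "?c I < k" by (elim incidences_doubleton) (use less colour in auto)
  qed
  moreover have "?c I \<noteq> ?c J"
    if "I \<in> incidences E" "J \<in> incidences E" "I \<noteq> J \<and> inc_adjacent I J" for I J
  proof -
    obtain v a where a: "I = (v, {v, a})" "{v, a} \<in> E" "a \<noteq> v"
      using edges \<open>I \<in> incidences E\<close> by (rule incidences_doubleton)
    obtain w b where b: "J = (w, {w, b})" "{w, b} \<in> E" "b \<noteq> w"
      using edges \<open>J \<in> incidences E\<close> by (rule incidences_doubleton)
    have "\<phi> a \<noteq> \<phi> b"
    proof (cases "v = w")
      case True
      then have "a \<noteq> b" using \<open>I \<noteq> J \<and> inc_adjacent I J\<close> a(1) b(1) by blast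
      then show ?thesis using nbrs a(2) b(2) True by blast
    next
      case False
      with \<open>I \<noteq> J \<and> inc_adjacent I J\<close> a(1,3) b(1,3) consider "w = a" | "v = b"
        unfolding inc_adjacent_def by (auto simp: doubleton_eq_iff)
      then show ?thesis
        using nbr[OF a(2)] nbr[OF b(2)] by cases auto
    qed
    then show ?thesis using a b colour by simp
  qed
  ultimately show ?thesis unfolding incidence_colouring_def by blast
qed

lemma incidence_chromatic_number_le:
  "incidence_colouring E k c \<Longrightarrow> incidence_chromatic_number E \<le> k"
  unfolding incidence_chromatic_number_def by (blast intro: Least_le)

lemma incidence_chromatic_number_colouring:
  assumes "finite (incidences E)"
  obtains c where "incidence_colouring E (incidence_chromatic_number E) c"
proof -
  obtain f :: "'a \<times> 'a set \<Rightarrow> nat" and k where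
    f: "f ` incidences E = {i. i < k}" "inj_on f (incidences E)"
    using finite_imp_inj_to_nat_seg[OF assms] by blast
  have "f I < k" if "I \<in> incidences E" for I
    using f(1) that by blast
  moreover have "f I \<noteq> f J" if "I \<in> incidences E" "J \<in> incidences E" "I \<noteq> J" for I J
    using inj_on_contraD[OF f(2) that(3,1,2)] .
  ultimately have "incidence_colouring E k f"
    unfolding incidence_colouring_def by (intro conjI ballI impI) auto
  then have "\<exists>k c. incidence_colouring E k c" by blast
  then have "\<exists>c. incidence_colouring E (incidence_chromatic_number E) c"
    unfolding incidence_chromatic_number_def by (rule LeastI_ex)
  then show thesis using that by blast
qed

lemma finite_incidences:
  assumes "finite E" "\<forall>e\<in>E. finite e"
  shows "finite (incidences E)"
proof (rule finite_subset)
  show "incidences E \<subseteq> \<Union>E \<times> E" unfolding incidences_def by blast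
  show "finite (\<Union>E \<times> E)" using assms by blast
qed

section \<open>Plane colourings with rainbow closed neighbourhoods\<close>

text \<open>The colour classes of a plane colouring with rainbow closed neighbourhoods turn out to be
  cosets of the lattice spanned by \<open>(2, 1)\<close> and \<open>(1, -2)\<close> (or of its mirror image);
  \<open>knight_stable G x y\<close> says that the class of \<open>(x, y)\<close> looks like this around \<open>(x, y)\<close>.\<close>
definition knight_stable :: "(int \<Rightarrow> int \<Rightarrow> 'a) \<Rightarrow> int \<Rightarrow> int \<Rightarrow> bool" where
  "knight_stable G x y \<longleftrightarrow>
     G (x + 2) (y + 1) = G x y \<and> G (x + 1) (y - 2) = G x y \<and>
     G (x - 2) (y - 1) = G x y \<and> G (x - 1) (y + 2) = G x y"

locale plane_rainbow_colouring =
  fixes G :: "int \<Rightarrow> int \<Rightarrow> nat"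
  assumes rainbow: "distinct [G (x + 1) y, G (x - 1) y, G x (y + 1), G x (y - 1), G x y]"
    and less_5: "G x y < 5"
begin

lemma transpose: "plane_rainbow_colouring (\<lambda>x y. G y x)"
proof
  show "distinct [G y (x + 1), G y (x - 1), G (y + 1) x, G (y - 1) x, G y x]" for x y
    using rainbow[of y x] by auto
qed (rule less_5)

text \<open>The neighbours are variables here so that instances such as \<open>x + 1 + 1\<close> can be
  matched against \<open>x + 2\<close>, leaving the arithmetic to \<open>simp\<close>.\<close>
lemma rainbow_at:
  "x\<^sub>1 = x + 1 \<Longrightarrow> x\<^sub>2 = x - 1 \<Longrightarrow> y\<^sub>1 = y + 1 \<Longrightarrow> y\<^sub>2 = y - 1 \<Longrightarrow>
    distinct [G x\<^sub>1 y, G x\<^sub>2 y, G x y\<^sub>1, G x y\<^sub>2, G x y]"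
  using rainbow by simp

lemma colour_in_closed_nbhd:
  assumes "x\<^sub>1 = x + 1" "x\<^sub>2 = x - 1" "y\<^sub>1 = y + 1" "y\<^sub>2 = y - 1"
  shows "G u v \<in> {G x\<^sub>1 y, G x\<^sub>2 y, G x y\<^sub>1, G x y\<^sub>2, G x y}"
proof -
  let ?N = "set [G x\<^sub>1 y, G x\<^sub>2 y, G x y\<^sub>1, G x y\<^sub>2, G x y]"
  have "?N \<subseteq> {..<5}" using less_5 by auto
  moreover have "card ?N = 5" using distinct_card[OF rainbow_at[OF assms]] by simp
  ultimately have "?N = {..<5}" by (simp add: card_subset_eq)
  then show ?thesis using less_5 by auto
qed

lemma knight_move_cases: "G (x + 2) (y + 1) = G x y \<or> G (x + 1) (y + 2) = G x y"
proof -
  have "G x y \<in> {G (x + 2) (y + 1), G x (y + 1), G (x + 1) (y + 2), G (x + 1) y, G (x + 1) (y + 1)}"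
    by (rule colour_in_closed_nbhd) simp_all
  moreover have "distinct [G (x + 1) y, G (x - 1) y, G x (y + 1), G x (y - 1), G x y]"
    by (rule rainbow)
  moreover have "distinct [G (x + 2) y, G x y, G (x + 1) (y + 1), G (x + 1) (y - 1), G (x + 1) y]"
    by (rule rainbow_at) simp_all
  ultimately show ?thesis by auto
qed

lemma knight_stable_if_knight_move:
  assumes "G (x + 2) (y + 1) = G x y"
  shows "knight_stable G x y"
proof -
  have r0: "distinct [G (x + 1) y, G (x - 1) y, G x (y + 1), G x (y - 1), G x y]"
    by (rule rainbow)
  have r1: "distinct [G (x + 2) y, G x y, G (x + 1) (y + 1), G (x + 1) (y - 1), G (x + 1) y]"
    by (rule rainbow_at) simp_all
  have r2: "distinct [G (x + 3) y, G (x + 1) y, G (x + 2) (y + 1), G (x + 2) (y - 1), G (x + 2) y]"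
    by (rule rainbow_at) simp_all
  have r3: "distinct [G x y, G (x - 2) y, G (x - 1) (y + 1), G (x - 1) (y - 1), G (x - 1) y]"
    by (rule rainbow_at) simp_all
  have r4: "distinct [G (x + 1) (y - 2), G (x - 1) (y - 2), G x (y - 1), G x (y - 3), G x (y - 2)]"
    by (rule rainbow_at) simp_all
  have r5: "distinct [G (x - 1) y, G (x - 3) y, G (x - 2) (y + 1), G (x - 2) (y - 1), G (x - 2) y]"
    by (rule rainbow_at) simp_all
  have "G x y \<in> {G (x + 2) (y - 1), G x (y - 1), G (x + 1) y, G (x + 1) (y - 2), G (x + 1) (y - 1)}"
    by (rule colour_in_closed_nbhd) simp_all
  then have 1: "G (x + 1) (y - 2) = G x y" using r0 r1 r2 assms by auto
  have "G x y \<in> {G x (y - 1), G (x - 2) (y - 1), G (x - 1) y, G (x - 1) (y - 2), G (x - 1) (y - 1)}"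
    by (rule colour_in_closed_nbhd) simp_all
  then have 2: "G (x - 2) (y - 1) = G x y" using r0 r3 r4 1 by auto
  have "G x y \<in> {G x (y + 1), G (x - 2) (y + 1), G (x - 1) (y + 2), G (x - 1) y, G (x - 1) (y + 1)}"
    by (rule colour_in_closed_nbhd) simp_all
  then have 3: "G (x - 1) (y + 2) = G x y" using r0 r3 r5 2 by auto
  show ?thesis unfolding knight_stable_def using assms 1 2 3 by simp
qed

lemma knight_stable_cases: "knight_stable G x y \<or> knight_stable (\<lambda>a b. G b a) y x"
proof -
  interpret T: plane_rainbow_colouring "\<lambda>a b. G b a" by (rule transpose)
  show ?thesis
    using knight_move_cases[of x y] knight_stable_if_knight_move T.knight_stable_if_knight_move
    by auto
qed

text \<open>Stability propagates along knight moves: at the target the transposed pattern would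
  put a colour twice into a closed neighbourhood.\<close>
lemma knight_stable_shift:
  assumes "knight_stable G x y"
  shows "knight_stable G (x + 2) (y + 1)" and "knight_stable G (x - 1) (y + 2)"
proof -
  have r1: "distinct [G (x + 2) y, G x y, G (x + 1) (y + 1), G (x + 1) (y - 1), G (x + 1) y]"
    by (rule rainbow_at) simp_all
  have "\<not> knight_stable (\<lambda>a b. G b a) (y + 1) (x + 2)"
  proof
    assume "knight_stable (\<lambda>a b. G b a) (y + 1) (x + 2)"
    then have "G (x + 1) (y - 1) = G (x + 2) (y + 1)"
      unfolding knight_stable_def by (simp add: algebra_simps)
    then show False using assms r1 unfolding knight_stable_def by simp
  qed
  then show "knight_stable G (x + 2) (y + 1)"
    using knight_stable_cases by blast
  have "\<not> knight_stable (\<lambda>a b. G b a) (y + 2) (x - 1)"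
  proof
    assume "knight_stable (\<lambda>a b. G b a) (y + 2) (x - 1)"
    then have "G (x + 1) (y + 1) = G (x - 1) (y + 2)"
      unfolding knight_stable_def by (simp add: algebra_simps)
    then show False using assms r1 unfolding knight_stable_def by simp
  qed
  then show "knight_stable G (x - 1) (y + 2)"
    using knight_stable_cases by blast
qed

lemma period_5_if_knight_stable:
  assumes "knight_stable G x y"
  shows "G (x + 5) y = G x y" and "G x (y + 5) = G x y"
proof -
  have a: "knight_stable G (x + 2) (y + 1)" using knight_stable_shift(1)[OF assms] .
  have "G (x + 5) y = G (x + 4) (y + 2)"
    using knight_stable_shift(1)[OF a] unfolding knight_stable_def by (simp add: algebra_simps)
  also have "\<dots> = G (x + 2) (y + 1)"
    using a unfolding knight_stable_def by (simp add: algebra_simps)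
  also have "\<dots> = G x y"
    using assms unfolding knight_stable_def by simp
  finally show "G (x + 5) y = G x y" .
  have "G x (y + 5) = G (x + 1) (y + 3)"
    using knight_stable_shift(2)[OF a] unfolding knight_stable_def by (simp add: algebra_simps)
  also have "\<dots> = G (x + 2) (y + 1)"
    using a unfolding knight_stable_def by (simp add: algebra_simps)
  also have "\<dots> = G x y"
    using assms unfolding knight_stable_def by simp
  finally show "G x (y + 5) = G x y" .
qed

lemma period_5: "G (x + 5) y = G x y" "G x (y + 5) = G x y"
proof -
  interpret T: plane_rainbow_colouring "\<lambda>a b. G b a" by (rule transpose)
  show "G (x + 5) y = G x y" "G x (y + 5) = G x y"
    using knight_stable_cases[of x y] period_5_if_knight_stable T.period_5_if_knight_stable
    by auto
qed

end

section \<open>Cycles and tori\<close>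

lemma periodic_gcd:
  fixes f :: "int \<Rightarrow> 'a"
  assumes a: "\<And>x. f (x + a) = f x" and b: "\<And>x. f (x + b) = f x"
  shows "f (x + gcd a b) = f x"
proof -
  interpret A: periodic_fun_simple f a by standard (rule a)
  interpret B: periodic_fun_simple f b by standard (rule b)
  obtain u v where "u * a + v * b = gcd a b" using bezout_int by blast
  then have "f (x + gcd a b) = f ((x + of_int v * b) + of_int u * a)"
    by (simp add: algebra_simps)
  also have "\<dots> = f x" by (simp only: A.plus_of_int B.plus_of_int)
  finally show ?thesis .
qed

lemma gcd_5_eq_1: "\<not> 5 dvd m \<Longrightarrow> gcd 5 (int m) = 1"
  using prime_imp_coprime[of "5 :: int" "int m"] by (simp add: int_dvd_int_iff[of 5, simplified])

definition cycle_point :: "nat \<Rightarrow> int \<Rightarrow> nat" where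
  "cycle_point m x = nat (x mod int m)"

lemma cycle_point_less: "m > 0 \<Longrightarrow> cycle_point m x < m"
  unfolding cycle_point_def by (simp add: nat_less_iff)

lemma cycle_point_of_nat: "i < m \<Longrightarrow> cycle_point m (int i) = i"
  unfolding cycle_point_def by (simp add: zmod_int)

lemma cycle_point_succ: "m > 0 \<Longrightarrow> cycle_point m (x + 1) = (cycle_point m x + 1) mod m"
proof -
  assume "m > 0"
  then have "int ((cycle_point m x + 1) mod m) = (x mod int m + 1) mod int m"
    unfolding cycle_point_def by (simp add: zmod_int add.commute)
  also have "\<dots> = (x + 1) mod int m" by (simp add: mod_add_left_eq)
  finally show ?thesis unfolding cycle_point_def by (metis nat_int)
qed

lemma cycle_point_eq_iff: "m > 0 \<Longrightarrow> cycle_point m x = cycle_point m x' \<longleftrightarrow> x mod int m = x' mod int m"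
  unfolding cycle_point_def by (simp add: eq_nat_nat_iff)

lemma cycle_point_add_period: "cycle_point m (x + int m) = cycle_point m x"
  unfolding cycle_point_def by simp

lemma cycle_edges_eq:
  assumes "m > 0"
  shows "cycle_edges m = {{cycle_point m x, cycle_point m (x + 1)} | x. True}"
proof (intro equalityI subsetI)
  fix e assume "e \<in> cycle_edges m"
  then obtain i where "i < m" "e = {i, (i + 1) mod m}" unfolding cycle_edges_def by blast
  then have "e = {cycle_point m (int i), cycle_point m (int i + 1)}"
    using assms by (simp add: cycle_point_succ cycle_point_of_nat)
  then show "e \<in> {{cycle_point m x, cycle_point m (x + 1)} | x. True}" by blast
next
  fix e assume "e \<in> {{cycle_point m x, cycle_point m (x + 1)} | x. True}"
  then obtain x where "e = {cycle_point m x, (cycle_point m x + 1) mod m}"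
    using assms by (auto simp: cycle_point_succ)
  then show "e \<in> cycle_edges m"
    unfolding cycle_edges_def using cycle_point_less[OF assms] by blast
qed

definition torus_point :: "nat \<Rightarrow> nat \<Rightarrow> int \<Rightarrow> int \<Rightarrow> nat \<times> nat" where
  "torus_point m n x y = (cycle_point m x, cycle_point n y)"

lemma torus_edges_iff:
  assumes m: "m > 0" and n: "n > 0"
  shows "e \<in> torus_edges m n \<longleftrightarrow>
    (\<exists>x y. e = {torus_point m n x y, torus_point m n (x + 1) y} \<or>
           e = {torus_point m n x y, torus_point m n x (y + 1)})" (is "_ \<longleftrightarrow> ?rhs")
proof
  assume "e \<in> torus_edges m n"
  then consider (vertical) u y where "u < m"
      "e = {(u, cycle_point n y), (u, cycle_point n (y + 1))}"
    | (horizontal) x v where "v < n"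
      "e = {(cycle_point m x, v), (cycle_point m (x + 1), v)}"
    unfolding torus_edges_def cart_prod_edges_def cycle_edges_eq[OF m] cycle_edges_eq[OF n]
    by (auto simp: doubleton_eq_iff)
  then show ?rhs
  proof cases
    case vertical
    then have "e = {torus_point m n (int u) y, torus_point m n (int u) (y + 1)}"
      by (simp add: torus_point_def cycle_point_of_nat)
    then show ?thesis by blast
  next
    case horizontal
    then have "e = {torus_point m n x (int v), torus_point m n (x + 1) (int v)}"
      by (simp add: torus_point_def cycle_point_of_nat)
    then show ?thesis by blast
  qed
next
  assume ?rhs
  then show "e \<in> torus_edges m n"
    unfolding torus_edges_def cart_prod_edges_def cycle_edges_eq[OF m] cycle_edges_eq[OF n]
      torus_point_def
    using cycle_point_less[OF m] cycle_point_less[OF n] by fastforce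
qed

lemma torus_point_eq_iff:
  "m > 0 \<Longrightarrow> n > 0 \<Longrightarrow> torus_point m n x y = torus_point m n x' y' \<longleftrightarrow>
    x mod int m = x' mod int m \<and> y mod int n = y' mod int n"
  by (simp add: torus_point_def cycle_point_eq_iff)

lemma torus_point_shift:
  assumes "m > 0" "n > 0" "torus_point m n x y = torus_point m n x' y'"
  shows "torus_point m n (x + a) (y + b) = torus_point m n (x' + a) (y' + b)"
  using assms by (auto simp: torus_point_eq_iff intro: mod_add_cong)

definition torus_nbrs :: "nat \<Rightarrow> nat \<Rightarrow> int \<Rightarrow> int \<Rightarrow> (nat \<times> nat) set" where
  "torus_nbrs m n x y = {torus_point m n (x + 1) y, torus_point m n (x - 1) y,
     torus_point m n x (y + 1), torus_point m n x (y - 1)}"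

lemma torus_edge_iff_nbr:
  assumes m: "m > 0" and n: "n > 0"
  shows "{torus_point m n x y, w} \<in> torus_edges m n \<longleftrightarrow> w \<in> torus_nbrs m n x y"
proof
  assume "{torus_point m n x y, w} \<in> torus_edges m n"
  then obtain x' y' where "{torus_point m n x y, w} = {torus_point m n x' y', torus_point m n (x' + 1) y'}
      \<or> {torus_point m n x y, w} = {torus_point m n x' y', torus_point m n x' (y' + 1)}"
    using torus_edges_iff[OF m n] by blast
  then show "w \<in> torus_nbrs m n x y"
    unfolding torus_nbrs_def doubleton_eq_iff
    using torus_point_shift[OF m n, of x y x' y' 1 0] torus_point_shift[OF m n, of x y x' y' 0 1]
      torus_point_shift[OF m n, of x y "x' + 1" y' "-1" 0] torus_point_shift[OF m n, of x y x' "y' + 1" 0 "-1"]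
    by auto
next
  assume "w \<in> torus_nbrs m n x y"
  moreover have
    "{torus_point m n x y, torus_point m n (x + 1) y} \<in> torus_edges m n"
    "{torus_point m n (x - 1) y, torus_point m n (x - 1 + 1) y} \<in> torus_edges m n"
    "{torus_point m n x y, torus_point m n x (y + 1)} \<in> torus_edges m n"
    "{torus_point m n x (y - 1), torus_point m n x (y - 1 + 1)} \<in> torus_edges m n"
    unfolding torus_edges_iff[OF m n] by blast+
  ultimately show "{torus_point m n x y, w} \<in> torus_edges m n"
    unfolding torus_nbrs_def by (auto simp: insert_commute)
qed

lemma torus_closed_nbhd_distinct:
  assumes m: "m \<ge> 3" and n: "n \<ge> 3"
  shows "distinct [torus_point m n (x + 1) y, torus_point m n (x - 1) y,
    torus_point m n x (y + 1), torus_point m n x (y - 1), torus_point m n x y]"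
proof -
  have "\<not> int m dvd 2" "\<not> int n dvd 2" using m n by (auto dest: zdvd_imp_le)
  then show ?thesis using m n by (auto simp: torus_point_eq_iff mod_eq_dvd_iff)
qed

lemma card_torus_nbrs: "m \<ge> 3 \<Longrightarrow> n \<ge> 3 \<Longrightarrow> card (torus_nbrs m n x y) = 4"
  using torus_closed_nbhd_distinct[of m n x y] unfolding torus_nbrs_def by auto

lemma torus_point_notin_nbrs: "m \<ge> 3 \<Longrightarrow> n \<ge> 3 \<Longrightarrow> torus_point m n x y \<notin> torus_nbrs m n x y"
  using torus_closed_nbhd_distinct[of m n x y] unfolding torus_nbrs_def by auto

lemma torus_point_add_period:
  "torus_point m n (x + int m) y = torus_point m n x y"
  "torus_point m n x (y + int n) = torus_point m n x y"
  by (simp_all add: torus_point_def cycle_point_add_period)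

lemma torus_nbrs_edges:
  "m > 0 \<Longrightarrow> n > 0 \<Longrightarrow> \<forall>w\<in>torus_nbrs m n x y. {torus_point m n x y, w} \<in> torus_edges m n"
  using torus_edge_iff_nbr by blast

lemma finite_torus_nbrs: "finite (torus_nbrs m n x y)"
  by (simp add: torus_nbrs_def)

lemma torus_incidence_colours_ge_5:
  assumes m: "m \<ge> 3" and n: "n \<ge> 3" and c: "incidence_colouring (torus_edges m n) k c"
  shows "5 \<le> k"
proof -
  have "torus_point m n 1 0 \<in> torus_nbrs m n 0 0" by (simp add: torus_nbrs_def)
  with c finite_torus_nbrs torus_point_notin_nbrs[OF m n] torus_nbrs_edges
  have "card (torus_nbrs m n 0 0) < k"
    by (rule incidence_colouring_degree_bound) (use m n in auto)
  then show ?thesis using card_torus_nbrs[OF m n] by simp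
qed

text \<open>The common colour of the incidences entering \<open>torus_point m n x y\<close> is read off at the
  incidence coming from \<open>torus_point m n (x + 1) y\<close>.\<close>
lemma torus_in_colour_rainbow:
  assumes m: "m \<ge> 3" and n: "n \<ge> 3" and c: "incidence_colouring (torus_edges m n) 5 c"
  shows "plane_rainbow_colouring
    (\<lambda>x y. c (torus_point m n (x + 1) y, {torus_point m n x y, torus_point m n (x + 1) y}))"
    (is "plane_rainbow_colouring ?G")
proof
  let ?p = "torus_point m n" and ?W = "torus_nbrs m n"
  have pos: "m > 0" "n > 0" using m n by auto
  have c': "incidence_colouring (torus_edges m n) (Suc (card (?W x y))) c" for x y
    using c card_torus_nbrs[OF m n] by simp
  have in_colour: "c (w, {?p x y, w}) = ?G x y" if "w \<in> ?W x y" for w x y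
    using c' finite_torus_nbrs torus_point_notin_nbrs[OF m n] torus_nbrs_edges[OF pos] that
    by (rule incidence_colouring_in_colours_eq) (simp add: torus_nbrs_def)
  fix x y
  let ?f = "\<lambda>w. c (?p x y, {?p x y, w})"
  have nbr: "?p x y \<in> ?W (x + 1) y" "?p x y \<in> ?W (x - 1) y"
    "?p x y \<in> ?W x (y + 1)" "?p x y \<in> ?W x (y - 1)"
    by (simp_all add: torus_nbrs_def)
  have G_nbrs: "?G (x + 1) y = ?f (?p (x + 1) y)" "?G (x - 1) y = ?f (?p (x - 1) y)"
    "?G x (y + 1) = ?f (?p x (y + 1))" "?G x (y - 1) = ?f (?p x (y - 1))"
    using in_colour[OF nbr(1)] in_colour[OF nbr(2)] in_colour[OF nbr(3)] in_colour[OF nbr(4)]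
    by (simp_all add: insert_commute)
  note out = incidence_colouring_out_colours[OF c finite_torus_nbrs[of m n x y]
      torus_point_notin_nbrs[OF m n, of x y] torus_nbrs_edges[OF pos, of x y]]
  have "inj_on ?f (?W x y)"
    using finite_torus_nbrs out(1) by (rule eq_card_imp_inj_on)
  moreover have "distinct [?p (x + 1) y, ?p (x - 1) y, ?p x (y + 1), ?p x (y - 1)]"
    using torus_closed_nbhd_distinct[OF m n, of x y] by simp
  moreover have "set [?p (x + 1) y, ?p (x - 1) y, ?p x (y + 1), ?p x (y - 1)] = ?W x y"
    by (simp add: torus_nbrs_def)
  ultimately have "distinct (map ?f [?p (x + 1) y, ?p (x - 1) y, ?p x (y + 1), ?p x (y - 1)])"
    by (simp only: distinct_map)
  moreover have "?p (x + 1) y \<in> ?W x y" by (simp add: torus_nbrs_def)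
  then have "?G x y \<notin> ?f ` ?W x y"
    using out(3) in_colour by blast
  ultimately show "distinct [?G (x + 1) y, ?G (x - 1) y, ?G x (y + 1), ?G x (y - 1), ?G x y]"
    unfolding G_nbrs by (auto simp: torus_nbrs_def)
  show "?G x y < 5"
    using incidence_colouring_less[OF c] torus_nbrs_edges[OF pos, of x y] by (simp add: torus_nbrs_def)
qed

lemma torus_5_colourable_imp_dvd:
  assumes m: "m \<ge> 3" and n: "n \<ge> 3" and c: "incidence_colouring (torus_edges m n) 5 c"
  shows "5 dvd m \<and> 5 dvd n"
proof -
  define G where "G x y = c (torus_point m n (x + 1) y, {torus_point m n x y, torus_point m n (x + 1) y})"
    for x y
  interpret plane_rainbow_colouring G
    unfolding G_def by (rule torus_in_colour_rainbow[OF m n c])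
  have "G (x + int m) y = G x y" for x y
    using torus_point_add_period(1)[of m n x y] torus_point_add_period(1)[of m n "x + 1" y]
    by (simp add: G_def ac_simps)
  then have "G (0 + gcd 5 (int m)) 0 = G 0 0"
    using period_5(1) by (intro periodic_gcd[where f = "\<lambda>x. G x 0"])
  moreover have "G x (y + int n) = G x y" for x y
    using torus_point_add_period(2)[of m n x y] torus_point_add_period(2)[of m n "x + 1" y]
    by (simp add: G_def)
  then have "G 0 (0 + gcd 5 (int n)) = G 0 0"
    using period_5(2) by (intro periodic_gcd[where f = "\<lambda>y. G 0 y"])
  ultimately show ?thesis
    using rainbow[of 0 0] gcd_5_eq_1[of m] gcd_5_eq_1[of n] by fastforce
qed

definition mod5_colour :: "nat \<times> nat \<Rightarrow> nat" where
  "mod5_colour p = (fst p + 2 * snd p) mod 5"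

lemma mod5_colour_torus_point:
  assumes "m > 0" "n > 0" "5 dvd m" "5 dvd n"
  shows "mod5_colour (torus_point m n x y) = nat ((x + 2 * y) mod 5)"
proof -
  have "0 \<le> x mod int m" "0 \<le> y mod int n" using assms(1,2) by simp_all
  then have "int (mod5_colour (torus_point m n x y)) = (x mod int m + 2 * (y mod int n)) mod 5"
    by (simp add: mod5_colour_def torus_point_def cycle_point_def zmod_int)
  also have "\<dots> = (x + 2 * y) mod 5"
  proof (rule mod_add_cong)
    have "(5::int) dvd int m" "(5::int) dvd int n"
      using assms(3,4) by (simp_all add: int_dvd_int_iff[of 5, simplified])
    then show "x mod int m mod 5 = x mod 5" "2 * (y mod int n) mod 5 = 2 * y mod 5"
      by (simp_all add: mod_mod_cancel mod_mult_cong)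
  qed
  finally show ?thesis by (metis nat_int)
qed

lemma mod5_colour_inj_on_closed_nbhd:
  assumes "m > 0" "n > 0" "5 dvd m" "5 dvd n"
  shows "inj_on mod5_colour (insert (torus_point m n x y) (torus_nbrs m n x y))"
proof -
  let ?p = "torus_point m n" and ?s = "x + 2 * y"
  let ?N = "[?p (x + 1) y, ?p (x - 1) y, ?p x (y + 1), ?p x (y - 1), ?p x y]"
  have "map mod5_colour ?N = map (\<lambda>d. nat ((?s + d) mod 5)) [1, -1, 2, -2, 0]"
    using mod5_colour_torus_point[OF assms] by (simp add: algebra_simps)
  moreover have "distinct (map (\<lambda>d. nat ((?s + d) mod 5)) [1, -1, 2, -2, 0])"
    by (simp add: eq_nat_nat_iff mod_eq_dvd_iff)
  ultimately have "distinct (map mod5_colour ?N)" by simp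
  moreover have "set ?N = insert (?p x y) (torus_nbrs m n x y)"
    by (auto simp: torus_nbrs_def)
  ultimately show ?thesis by (simp only: distinct_map)
qed

lemma torus_edge_nbr:
  assumes "m > 0" "n > 0" "{v, u} \<in> torus_edges m n"
  obtains x y where "v = torus_point m n x y" "u \<in> torus_nbrs m n x y"
proof -
  obtain x y where "v = torus_point m n x y"
    using assms(3) unfolding torus_edges_iff[OF assms(1,2)] by blast
  with assms that show thesis using torus_edge_iff_nbr by blast
qed

lemma torus_incidence_colouring_5:
  assumes m: "m \<ge> 3" and n: "n \<ge> 3" and "5 dvd m" "5 dvd n"
  shows "incidence_colouring (torus_edges m n) 5 (\<lambda>(v, e). mod5_colour (the_elem (e - {v})))"
proof (rule incidence_colouring_of_vertex_colouring)
  have pos: "m > 0" "n > 0" using m n by auto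
  note inj = mod5_colour_inj_on_closed_nbhd[OF pos assms(3,4)]
  show "\<forall>e\<in>torus_edges m n. \<exists>a b. a \<noteq> b \<and> e = {a, b}"
  proof
    fix e assume "e \<in> torus_edges m n"
    then obtain x y where "e = {torus_point m n x y, torus_point m n (x + 1) y} \<or>
        e = {torus_point m n x y, torus_point m n x (y + 1)}"
      unfolding torus_edges_iff[OF pos] by blast
    moreover have "torus_point m n x y \<noteq> torus_point m n (x + 1) y"
      "torus_point m n x y \<noteq> torus_point m n x (y + 1)"
      using torus_closed_nbhd_distinct[OF m n, of x y] by auto
    ultimately show "\<exists>a b. a \<noteq> b \<and> e = {a, b}" by blast
  qed
  show "\<forall>e\<in>torus_edges m n. \<forall>u\<in>e. mod5_colour u < 5"
    by (simp add: mod5_colour_def)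
  show "mod5_colour u \<noteq> mod5_colour v" if "{v, u} \<in> torus_edges m n" for v u
    using pos that
  proof (rule torus_edge_nbr)
    fix x y assume "v = torus_point m n x y" "u \<in> torus_nbrs m n x y"
    then show ?thesis
      using inj_on_contraD[OF inj, of u v] torus_point_notin_nbrs[OF m n] by blast
  qed
  show "mod5_colour u \<noteq> mod5_colour w"
    if "{v, u} \<in> torus_edges m n" "{v, w} \<in> torus_edges m n" "u \<noteq> w" for v u w
    using pos that(1)
  proof (rule torus_edge_nbr)
    fix x y assume "v = torus_point m n x y" "u \<in> torus_nbrs m n x y"
    moreover have "w \<in> torus_nbrs m n x y"
      using that(2) \<open>v = torus_point m n x y\<close> torus_edge_iff_nbr[OF pos] by blast
    ultimately show ?thesis
      using inj_on_contraD[OF inj, of u w] \<open>u \<noteq> w\<close> by blast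
  qed
qed

lemma finite_torus_incidences:
  assumes m: "m > 0" and n: "n > 0"
  shows "finite (incidences (torus_edges m n))"
proof (rule finite_incidences)
  have sub: "torus_edges m n \<subseteq> Pow ({..<m} \<times> {..<n})"
  proof
    fix e assume "e \<in> torus_edges m n"
    then obtain x y where "e = {torus_point m n x y, torus_point m n (x + 1) y} \<or>
        e = {torus_point m n x y, torus_point m n x (y + 1)}"
      unfolding torus_edges_iff[OF m n] by blast
    then show "e \<in> Pow ({..<m} \<times> {..<n})"
      using cycle_point_less[OF m] cycle_point_less[OF n] by (auto simp: torus_point_def)
  qed
  then show "finite (torus_edges m n)" by (rule finite_subset) simp
  show "\<forall>e\<in>torus_edges m n. finite e"
    using sub by (auto intro: finite_subset)
qed

theorem corollary1:
  fixes m n :: nat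
  assumes "m \<ge> 3" and "n \<ge> 3"
  shows "incidence_chromatic_number (torus_edges m n) \<ge> 5 \<and>
         (incidence_chromatic_number (torus_edges m n) = 5 \<longleftrightarrow> 5 dvd m \<and> 5 dvd n)"
proof -
  let ?\<chi> = "incidence_chromatic_number (torus_edges m n)"
  have "finite (incidences (torus_edges m n))"
    using assms by (intro finite_torus_incidences) auto
  then obtain c where c: "incidence_colouring (torus_edges m n) ?\<chi> c"
    by (rule incidence_chromatic_number_colouring)
  have ge: "5 \<le> ?\<chi>" using torus_incidence_colours_ge_5[OF assms c] .
  moreover have "?\<chi> = 5 \<longleftrightarrow> 5 dvd m \<and> 5 dvd n"
  proof
    assume "?\<chi> = 5"
    then show "5 dvd m \<and> 5 dvd n" using torus_5_colourable_imp_dvd[OF assms] c by simp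
  next
    assume "5 dvd m \<and> 5 dvd n"
    then have "?\<chi> \<le> 5"
      using torus_incidence_colouring_5[OF assms] incidence_chromatic_number_le by blast
    with ge show "?\<chi> = 5" by simp
  qed
  ultimately show ?thesis by simp
qed

end
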